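(* Let $\beta>0$, $0<\alpha<1$, let $n$ be a positive integer, $g\in H(\mathbb{D})$, and $I_g^{n,0}f=I^n(fg)$. Then the following are equivalent: (i) $I_g^{n,0}:\mathcal{B}^{\alpha}\to\mathcal{B}^{\beta}$ is bounded; (ii) $I_g^{n,0}:\mathcal{B}^{\alpha}\to\mathcal{B}^{\beta}$ is compact; (iii) $\sup_{z\in\mathbb{D}}(1-|z|^2)^{n+\beta-1}|g(z)|<\infty$.
   Context: $\mathbb{D}$ is the open unit disc in $\mathbb{C}$ and $H(\mathbb{D})$ the space of analytic functions on $\mathbb{D}$. For $\gamma>0$, $\mathcal{B}^{\gamma}$ is the Banach space of $f\in H(\mathbb{D})$ with $\|f\|_{\mathcal{B}^{\gamma}}=|f(0)|+\sup_{z\in\mathbb{D}}(1-|z|^2)^{\gamma}|f'(z)|<\infty$. $I$ is the integration operator $If(z)=\int_0^z f(\zeta)\,d\zeta$ and $I^n$ its $n$th iterate. An operator is bounded (compact) from $\mathcal{B}^\alpha$ to $\mathcal{B}^\beta$ if it maps $\mathcal{B}^\alpha$ into $\mathcal{B}^\beta$ and is bounded (compact) as a linear operator between these Banach spaces. *)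

theory Defs
  imports "HOL-Complex_Analysis.Complex_Analysis"
begin

definition bloch_space :: "real \<Rightarrow> (complex \<Rightarrow> complex) set" where
  "bloch_space \<gamma> = {f. f holomorphic_on ball 0 1 \<and>
     bdd_above ((\<lambda>z. (1 - (cmod z)\<^sup>2) powr \<gamma> * cmod (deriv f z)) ` ball 0 1)}"

definition bloch_norm :: "real \<Rightarrow> (complex \<Rightarrow> complex) \<Rightarrow> real" where
  "bloch_norm \<gamma> f = cmod (f 0) +
     (SUP z\<in>ball 0 1. (1 - (cmod z)\<^sup>2) powr \<gamma> * cmod (deriv f z))"

definition intop :: "(complex \<Rightarrow> complex) \<Rightarrow> complex \<Rightarrow> complex" where
  "intop f z = contour_integral (linepath 0 z) f"

definition bounded_op_bloch ::
  "((complex \<Rightarrow> complex) \<Rightarrow> (complex \<Rightarrow> complex)) \<Rightarrow> real \<Rightarrow> real \<Rightarrow> bool" where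
  "bounded_op_bloch T \<alpha> \<beta> \<longleftrightarrow>
     (\<forall>f\<in>bloch_space \<alpha>. T f \<in> bloch_space \<beta>) \<and>
     (\<exists>C. \<forall>f\<in>bloch_space \<alpha>. bloch_norm \<beta> (T f) \<le> C * bloch_norm \<alpha> f)"

definition compact_op_bloch ::
  "((complex \<Rightarrow> complex) \<Rightarrow> (complex \<Rightarrow> complex)) \<Rightarrow> real \<Rightarrow> real \<Rightarrow> bool" where
  "compact_op_bloch T \<alpha> \<beta> \<longleftrightarrow>
     (\<forall>f\<in>bloch_space \<alpha>. T f \<in> bloch_space \<beta>) \<and>
     (\<forall>F::nat \<Rightarrow> complex \<Rightarrow> complex.
        (\<forall>k. F k \<in> bloch_space \<alpha>) \<and> (\<exists>M. \<forall>k. bloch_norm \<alpha> (F k) \<le> M) \<longrightarrow>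
        (\<exists>r h. strict_mono r \<and> h \<in> bloch_space \<beta> \<and>
           (\<lambda>k. bloch_norm \<beta> (\<lambda>z. T (F (r k)) z - h z)) \<longlonglongrightarrow> 0))"

end

theory Submission
  imports Defs
begin

text \<open>
  For 0 < \<alpha> < 1 every f in B^\<alpha> is bounded by ||f|| / (1 - \<alpha>) and is uniformly Holder
  continuous along radii: |f z - f (a z)| <= ||f|| (1 - a)^(1 - \<alpha>) / (1 - \<alpha>).
  Since (I^n (f g))' = I^(n-1) (f g), and one integration turns a weighted bound
  (1 - |z|^2)^\<gamma> |h z| <= K with \<gamma> > 1 into one with exponent \<gamma> - 1, condition (iii) makes
  u \<mapsto> I^n (u g) bounded from the sup norm into B^\<beta>. By Montel's theorem and the radial
  Holder estimate a bounded sequence in B^\<alpha> has a subsequence converging uniformly on the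
  whole disc, so the operator is even compact. Conversely, boundedness gives I^n g = T 1 in B^\<beta>,
  and n - 1 Cauchy estimates, each raising the exponent by one, give (iii).
\<close>

definition weighted_sup_le :: "real \<Rightarrow> (complex \<Rightarrow> complex) \<Rightarrow> real \<Rightarrow> bool" where
  "weighted_sup_le \<gamma> h K \<longleftrightarrow> (\<forall>z\<in>ball 0 1. (1 - (cmod z)\<^sup>2) powr \<gamma> * cmod (h z) \<le> K)"

lemma bdd_above_weighted_iff:
  "bdd_above ((\<lambda>z. (1 - (cmod z)\<^sup>2) powr \<gamma> * cmod (h z)) ` ball 0 1) \<longleftrightarrow> (\<exists>K. weighted_sup_le \<gamma> h K)"
  by (auto simp: bdd_above_def weighted_sup_le_def)

lemma weighted_sup_le_nonneg: "weighted_sup_le \<gamma> h K \<Longrightarrow> 0 \<le> K"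
  unfolding weighted_sup_le_def
  by (metis centre_in_ball norm_ge_zero order_trans zero_le_mult_iff powr_ge_zero zero_less_one)

lemma weighted_sup_le_cong:
  "(\<And>z. z \<in> ball 0 1 \<Longrightarrow> h z = h' z) \<Longrightarrow> weighted_sup_le \<gamma> h K \<longleftrightarrow> weighted_sup_le \<gamma> h' K"
  by (simp add: weighted_sup_le_def)

lemma norm_le_if_weighted_sup_le:
  assumes "weighted_sup_le \<gamma> h K" and "0 \<le> \<gamma>" and z: "z \<in> ball 0 1"
  shows "cmod (h z) \<le> K / (1 - cmod z) powr \<gamma>"
proof -
  have "1 - cmod z \<le> 1 - (cmod z)\<^sup>2"
    using z by (simp add: power2_eq_square mult_left_le_one_le)
  then have "(1 - cmod z) powr \<gamma> * cmod (h z) \<le> (1 - (cmod z)\<^sup>2) powr \<gamma> * cmod (h z)"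
    using z \<open>0 \<le> \<gamma>\<close> by (intro mult_right_mono powr_mono2) auto
  also have "\<dots> \<le> K"
    using assms z by (simp add: weighted_sup_le_def)
  finally show ?thesis
    using z by (simp add: field_simps)
qed

lemma weighted_sup_le_mult_bounded:
  assumes "weighted_sup_le \<gamma> g K" and B: "\<And>z. z \<in> ball 0 1 \<Longrightarrow> cmod (u z) \<le> B"
  shows "weighted_sup_le \<gamma> (\<lambda>z. u z * g z) (B * K)"
  unfolding weighted_sup_le_def
proof
  fix z :: complex assume z: "z \<in> ball 0 1"
  have "0 \<le> B"
    using order_trans[OF norm_ge_zero B[of 0]] by simp
  have "(1 - (cmod z)\<^sup>2) powr \<gamma> * cmod (u z * g z) = cmod (u z) * ((1 - (cmod z)\<^sup>2) powr \<gamma> * cmod (g z))"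
    by (simp add: norm_mult mult_ac)
  also have "\<dots> \<le> B * K"
    using B[OF z] assms(1) z \<open>0 \<le> B\<close> by (intro mult_mono) (auto simp: weighted_sup_le_def)
  finally show "(1 - (cmod z)\<^sup>2) powr \<gamma> * cmod (u z * g z) \<le> B * K" .
qed

lemma bloch_space_iff:
  "f \<in> bloch_space \<gamma> \<longleftrightarrow> f holomorphic_on ball 0 1 \<and> (\<exists>K. weighted_sup_le \<gamma> (deriv f) K)"
  by (simp add: bloch_space_def bdd_above_weighted_iff)

lemma weighted_sup_le_bloch_norm:
  assumes "f \<in> bloch_space \<gamma>"
  shows "weighted_sup_le \<gamma> (deriv f) (bloch_norm \<gamma> f - cmod (f 0))"
  using assms unfolding bloch_space_def bloch_norm_def weighted_sup_le_def
  by (auto intro: cSUP_upper)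

lemma bloch_norm_le:
  assumes "weighted_sup_le \<gamma> (deriv f) K"
  shows "bloch_norm \<gamma> f \<le> cmod (f 0) + K"
  using assms unfolding bloch_norm_def weighted_sup_le_def
  by (auto intro: cSUP_least)

lemma bloch_norm_nonneg: "f \<in> bloch_space \<gamma> \<Longrightarrow> 0 \<le> bloch_norm \<gamma> f"
  using weighted_sup_le_nonneg[OF weighted_sup_le_bloch_norm] by (smt (verit) norm_ge_zero)

lemma bloch_norm_cong:
  assumes "\<And>z. z \<in> ball 0 1 \<Longrightarrow> f z = f' z"
  shows "bloch_norm \<gamma> f = bloch_norm \<gamma> f'"
proof -
  have "deriv f z = deriv f' z" if "z \<in> ball 0 1" for z
    using that assms by (intro deriv_cong_ev) (auto simp: eventually_nhds intro!: exI[of _ "ball 0 1"])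
  then show ?thesis
    using assms by (simp add: bloch_norm_def)
qed

lemma constant_in_bloch_space: "(\<lambda>_. c) \<in> bloch_space \<gamma>"
  by (auto simp: bloch_space_iff weighted_sup_le_def)

lemma intop_0 [simp]: "intop h 0 = 0"
  by (simp add: intop_def)

context
  fixes S :: "complex set"
  assumes S: "open S" "convex S" "0 \<in> S"
begin

lemma intop_has_field_derivative:
  assumes h: "h holomorphic_on S" and z: "z \<in> S"
  shows "(intop h has_field_derivative h z) (at z)"
proof -
  have "(intop h has_field_derivative h z) (at z within S)"
    unfolding intop_def
  proof (rule triangle_contour_integrals_convex_primitive[where S=S])
    show "continuous_on S h"
      using h holomorphic_on_imp_continuous_on by blast
    fix b c assume "b \<in> S" "c \<in> S"
    then have "path_image (linepath 0 b +++ linepath b c +++ linepath c 0) \<subseteq> S"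
      using S convex_contains_segment by (auto simp: path_image_join)
    then have "(h has_contour_integral 0) (linepath 0 b +++ linepath b c +++ linepath c 0)"
      by (intro Cauchy_theorem_convex_simple[OF h S(2)]) auto
    then show "contour_integral (linepath 0 b) h + contour_integral (linepath b c) h
                 + contour_integral (linepath c 0) h = 0"
      by (rule has_chain_integral_chain_integral3)
  qed (use S z in auto)
  then show ?thesis
    using at_within_open[OF z S(1)] by simp
qed

lemma holomorphic_on_intop: "h holomorphic_on S \<Longrightarrow> intop h holomorphic_on S"
  using intop_has_field_derivative holomorphic_on_open S(1) by blast

lemma deriv_intop: "h holomorphic_on S \<Longrightarrow> z \<in> S \<Longrightarrow> deriv (intop h) z = h z"
  using intop_has_field_derivative DERIV_imp_deriv by blast

lemma holomorphic_on_funpow_intop: "h holomorphic_on S \<Longrightarrow> (intop ^^ k) h holomorphic_on S"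
  by (induction k) (auto intro: holomorphic_on_intop)

lemma deriv_funpow_intop_Suc:
  "h holomorphic_on S \<Longrightarrow> z \<in> S \<Longrightarrow> deriv ((intop ^^ Suc m) h) z = (intop ^^ m) h z"
  using deriv_intop[OF holomorphic_on_funpow_intop] by simp

lemma intop_cong:
  assumes "\<And>w. w \<in> S \<Longrightarrow> h w = h' w" and "z \<in> S"
  shows "intop h z = intop h' z"
proof -
  have "closed_segment 0 z \<subseteq> S"
    using S assms(2) convex_contains_segment by blast
  then show ?thesis
    unfolding intop_def using assms(1) by (intro contour_integral_eq) auto
qed

lemma intop_diff:
  assumes "h holomorphic_on S" "h' holomorphic_on S" and "z \<in> S"
  shows "intop (\<lambda>w. h w - h' w) z = intop h z - intop h' z"
proof -
  have "closed_segment 0 z \<subseteq> S"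
    using S assms(3) convex_contains_segment by blast
  then have "h contour_integrable_on linepath 0 z" "h' contour_integrable_on linepath 0 z"
    using assms by (auto intro!: contour_integrable_continuous_linepath
        intro: continuous_on_subset holomorphic_on_imp_continuous_on)
  then show ?thesis
    unfolding intop_def by (rule contour_integral_diff)
qed

lemma funpow_intop_diff:
  assumes "h holomorphic_on S" "h' holomorphic_on S"
  shows "z \<in> S \<Longrightarrow> (intop ^^ k) (\<lambda>w. h w - h' w) z = (intop ^^ k) h z - (intop ^^ k) h' z"
proof (induction k arbitrary: z)
  case (Suc k)
  have "(intop ^^ Suc k) (\<lambda>w. h w - h' w) z = intop (\<lambda>w. (intop ^^ k) h w - (intop ^^ k) h' w) z"
    using Suc by (simp only: funpow.simps o_apply) (rule intop_cong; simp)
  also have "\<dots> = (intop ^^ Suc k) h z - (intop ^^ Suc k) h' z"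
    using Suc.prems assms by (simp add: intop_diff holomorphic_on_funpow_intop)
  finally show ?case .
qed simp

lemma funpow_intop_mult_diff:
  assumes "u holomorphic_on S" "v holomorphic_on S" "g holomorphic_on S" and "z \<in> S"
  shows "(intop ^^ k) (\<lambda>w. u w * g w) z - (intop ^^ k) (\<lambda>w. v w * g w) z
           = (intop ^^ k) (\<lambda>w. (u w - v w) * g w) z"
  using funpow_intop_diff[of "\<lambda>w. u w * g w" "\<lambda>w. v w * g w"] assms
  by (simp add: holomorphic_on_mult left_diff_distrib)

end

lemma unit_ball_intop_domain:
  "open (ball (0::complex) 1)" "convex (ball (0::complex) 1)" "(0::complex) \<in> ball 0 1"
  by auto

lemma has_vector_derivative_radial:
  assumes "F holomorphic_on S" "open S" "of_real t * z \<in> S"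
  shows "((\<lambda>t. F (of_real t * z)) has_vector_derivative z * deriv F (of_real t * z)) (at t)"
proof -
  have "((\<lambda>t. of_real t * z) has_vector_derivative z) (at t)"
    by (auto intro!: derivative_eq_intros)
  from field_vector_diff_chain_at[OF this holomorphic_derivI[OF assms]]
  show ?thesis
    by (simp add: o_def)
qed

lemma norm_diff_radial_le:
  fixes F :: "complex \<Rightarrow> complex" and c K a :: real
  assumes F: "F holomorphic_on ball 0 1" and z: "z \<in> ball 0 1"
    and c: "0 \<le> c" "c \<noteq> 1" and a: "0 \<le> a" "a < 1"
    and K: "weighted_sup_le c (deriv F) K"
  shows "cmod (F z - F (of_real a * z))
           \<le> K / (1 - c) * ((1 - a * cmod z) powr (1 - c) - (1 - cmod z) powr (1 - c))"
proof -
  define r where "r = cmod z"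
  have r: "0 \<le> r" "r < 1"
    using z by (auto simp: r_def)
  have tr: "t * r \<le> r" "0 < 1 - t * r" if "0 \<le> t" "t \<le> 1" for t :: real
    using that r mult_left_le_one_le[of r t] by (auto simp: mult.commute)
  have tz: "of_real t * z \<in> ball 0 1" if "0 \<le> t" "t \<le> 1" for t :: real
    using tr[OF that] r that by (simp add: norm_mult r_def)
  have F': "((\<lambda>t. F (of_real t * z)) has_vector_derivative z * deriv F (of_real t * z)) (at t)"
    if "0 \<le> t" "t \<le> 1" for t :: real
    using F open_ball tz[OF that] by (rule has_vector_derivative_radial)
  \<comment> \<open>a primitive of \<open>K r (1 - t r) powr (- c)\<close>, which bounds the derivative of \<open>t \<mapsto> F (t z)\<close>\<close>
  define \<phi> where "\<phi> t = - K / (1 - c) * (1 - t * r) powr (1 - c)" for t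
  have \<phi>': "(\<phi> has_vector_derivative K * r * (1 - t * r) powr (- c)) (at t)"
    if "0 \<le> t" "t \<le> 1" for t :: real
  proof -
    have "(\<phi> has_real_derivative
            - K / (1 - c) * ((1 - c) * (1 - t * r) powr (1 - c - 1) * (0 - 1 * r))) (at t)"
      unfolding \<phi>_def using tr[OF that] by (auto intro!: derivative_eq_intros)
    moreover have "- K / (1 - c) * ((1 - c) * (1 - t * r) powr (1 - c - 1) * (0 - 1 * r))
                     = K * r * (1 - t * r) powr (- c)"
      using c by (simp add: field_simps)
    ultimately show ?thesis
      by (simp add: has_real_derivative_iff_has_vector_derivative)
  qed
  have "cmod (F (of_real 1 * z) - F (of_real a * z)) \<le> \<phi> 1 - \<phi> a"
  proof (rule differentiable_bound_general[OF a(2)])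
    show "continuous_on {a..1} (\<lambda>t. F (of_real t * z))" "continuous_on {a..1} \<phi>"
      using F' \<phi>' a by (auto intro!: continuous_at_imp_continuous_on)
        (meson has_vector_derivative_continuous order_trans)+
    fix t assume t: "a < t" "t < 1"
    then have t01: "0 \<le> t" "t \<le> 1"
      using a by auto
    show "((\<lambda>t. F (of_real t * z)) has_vector_derivative z * deriv F (of_real t * z)) (at t)"
         "(\<phi> has_vector_derivative K * r * (1 - t * r) powr (- c)) (at t)"
      using F' \<phi>' t01 by auto
    have "cmod (deriv F (of_real t * z)) \<le> K / (1 - t * r) powr c"
      using norm_le_if_weighted_sup_le[OF K c(1) tz[OF t01]] t01 by (simp add: norm_mult r_def)
    then have "r * cmod (deriv F (of_real t * z)) \<le> r * (K / (1 - t * r) powr c)"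
      using r by (intro mult_left_mono)
    then show "cmod (z * deriv F (of_real t * z)) \<le> K * r * (1 - t * r) powr (- c)"
      by (simp add: norm_mult r_def powr_minus divide_inverse mult_ac)
  qed
  then show ?thesis
    by (simp add: \<phi>_def r_def diff_divide_distrib right_diff_distrib)
qed

lemma norm_intop_le_if_weighted_sup_le:
  assumes h: "h holomorphic_on ball 0 1" and "1 < \<gamma>" and K: "weighted_sup_le \<gamma> h K"
    and z: "z \<in> ball 0 1"
  shows "cmod (intop h z) \<le> K / (\<gamma> - 1) * (1 - cmod z) powr (1 - \<gamma>)"
proof -
  have "K \<ge> 0"
    using K by (rule weighted_sup_le_nonneg)
  have "weighted_sup_le \<gamma> (deriv (intop h)) K"
    using K by (subst weighted_sup_le_cong[OF deriv_intop[OF unit_ball_intop_domain h]])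
  then have "cmod (intop h z - intop h (of_real 0 * z))
               \<le> K / (1 - \<gamma>) * ((1 - 0 * cmod z) powr (1 - \<gamma>) - (1 - cmod z) powr (1 - \<gamma>))"
    using \<open>1 < \<gamma>\<close> by (intro norm_diff_radial_le holomorphic_on_intop[OF unit_ball_intop_domain h] z) auto
  then have "cmod (intop h z) \<le> K / (1 - \<gamma>) * (1 - (1 - cmod z) powr (1 - \<gamma>))"
    by simp
  also have "\<dots> = K / (\<gamma> - 1) * ((1 - cmod z) powr (1 - \<gamma>) - 1)"
    using \<open>1 < \<gamma>\<close> by (simp add: field_simps)
  also have "\<dots> \<le> K / (\<gamma> - 1) * (1 - cmod z) powr (1 - \<gamma>)"
    using \<open>1 < \<gamma>\<close> \<open>K \<ge> 0\<close> by (intro mult_left_mono) auto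
  finally show ?thesis .
qed

lemma weighted_sup_le_intop:
  assumes h: "h holomorphic_on ball 0 1" and "1 < \<gamma>" and K: "weighted_sup_le \<gamma> h K"
  shows "weighted_sup_le (\<gamma> - 1) (intop h) (2 powr (\<gamma> - 1) / (\<gamma> - 1) * K)"
  unfolding weighted_sup_le_def
proof
  fix z :: complex assume z: "z \<in> ball 0 1"
  define r where "r = cmod z"
  have r: "0 \<le> r" "r < 1"
    using z by (auto simp: r_def)
  have "K \<ge> 0"
    using K by (rule weighted_sup_le_nonneg)
  have "(1 - r\<^sup>2) powr (\<gamma> - 1) * cmod (intop h z)
          \<le> (1 - r\<^sup>2) powr (\<gamma> - 1) * (K / (\<gamma> - 1) * (1 - r) powr (1 - \<gamma>))"
    using norm_intop_le_if_weighted_sup_le[OF assms z] by (intro mult_left_mono) (auto simp: r_def)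
  also have "\<dots> = K / (\<gamma> - 1) * (1 + r) powr (\<gamma> - 1)"
  proof -
    have "(1 - r\<^sup>2) powr (\<gamma> - 1) = (1 - r) powr (\<gamma> - 1) * (1 + r) powr (\<gamma> - 1)"
      using r by (subst powr_mult[symmetric]) (auto simp: power2_eq_square algebra_simps)
    moreover have "(1 - r) powr (\<gamma> - 1) * (1 - r) powr (1 - \<gamma>) = 1"
      using r by (simp flip: powr_add)
    ultimately show ?thesis
      by (simp add: mult_ac)
  qed
  also have "\<dots> \<le> K / (\<gamma> - 1) * 2 powr (\<gamma> - 1)"
    using r \<open>1 < \<gamma>\<close> \<open>K \<ge> 0\<close> by (intro mult_left_mono powr_mono2) auto
  also have "\<dots> = 2 powr (\<gamma> - 1) / (\<gamma> - 1) * K"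
    by simp
  finally show "(1 - (cmod z)\<^sup>2) powr (\<gamma> - 1) * cmod (intop h z) \<le> 2 powr (\<gamma> - 1) / (\<gamma> - 1) * K"
    by (simp add: r_def)
qed

lemma norm_deriv_le_if_weighted_sup_le:
  assumes h: "h holomorphic_on ball 0 1" and "0 \<le> \<gamma>" and K: "weighted_sup_le \<gamma> h K"
    and z: "z \<in> ball 0 1"
  shows "cmod (deriv h z) \<le> K / ((1 - cmod z) / 2) powr (\<gamma> + 1)"
proof -
  define \<rho> where "\<rho> = (1 - cmod z) / 2"
  have "0 < \<rho>"
    using z by (simp add: \<rho>_def)
  have near: "x \<in> ball 0 1 \<and> \<rho> \<le> 1 - cmod x" if "x \<in> cball z \<rho>" for x
  proof -
    have "cmod x \<le> cmod z + \<rho>"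
      using that norm_triangle_ineq2[of x z] by (simp add: dist_norm norm_minus_commute)
    then show ?thesis
      using z by (simp add: \<rho>_def field_simps)
  qed
  have "cmod ((deriv ^^ 1) h z) \<le> fact 1 * (K / \<rho> powr \<gamma>) / \<rho> ^ 1"
  proof (rule Cauchy_inequality)
    show "h holomorphic_on ball z \<rho>" "continuous_on (cball z \<rho>) h"
      using near ball_subset_cball
      by (blast intro: holomorphic_on_subset[OF h]
          continuous_on_subset[OF holomorphic_on_imp_continuous_on[OF h]])+
    fix x assume "cmod (z - x) = \<rho>"
    then have x: "x \<in> ball 0 1" "\<rho> \<le> 1 - cmod x"
      using near[of x] by (auto simp: dist_norm)
    have "cmod (h x) \<le> K / (1 - cmod x) powr \<gamma>"
      using norm_le_if_weighted_sup_le[OF K \<open>0 \<le> \<gamma>\<close> x(1)] .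
    also have "\<dots> \<le> K / \<rho> powr \<gamma>"
      using x \<open>0 < \<rho>\<close> \<open>0 \<le> \<gamma>\<close> weighted_sup_le_nonneg[OF K]
      by (intro divide_left_mono powr_mono2 mult_pos_pos) auto
    finally show "cmod (h x) \<le> K / \<rho> powr \<gamma>" .
  qed (use \<open>0 < \<rho>\<close> in auto)
  then show ?thesis
    using \<open>0 < \<rho>\<close> by (simp add: \<rho>_def powr_add field_simps)
qed

lemma weighted_sup_le_deriv:
  assumes h: "h holomorphic_on ball 0 1" and "0 \<le> \<gamma>" and K: "weighted_sup_le \<gamma> h K"
  shows "weighted_sup_le (\<gamma> + 1) (deriv h) (4 powr (\<gamma> + 1) * K)"
  unfolding weighted_sup_le_def
proof
  fix z :: complex assume z: "z \<in> ball 0 1"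
  define r where "r = cmod z"
  define \<rho> where "\<rho> = (1 - r) / 2"
  have r: "0 \<le> r" "r < 1"
    using z by (auto simp: r_def)
  then have "0 < \<rho>"
    by (simp add: \<rho>_def)
  have "\<rho> powr (\<gamma> + 1) * cmod (deriv h z) \<le> K"
    using norm_deriv_le_if_weighted_sup_le[OF assms z] \<open>0 < \<rho>\<close>
    by (simp add: \<rho>_def r_def field_simps)
  moreover have "(1 - r\<^sup>2) powr (\<gamma> + 1) \<le> 4 powr (\<gamma> + 1) * \<rho> powr (\<gamma> + 1)"
  proof -
    have "1 - r\<^sup>2 = (2 * (1 + r)) * \<rho>"
      by (simp add: \<rho>_def power2_eq_square field_simps)
    also have "\<dots> \<le> 4 * \<rho>"
      using r \<open>0 < \<rho>\<close> by (intro mult_right_mono) auto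
    finally have "(1 - r\<^sup>2) powr (\<gamma> + 1) \<le> (4 * \<rho>) powr (\<gamma> + 1)"
      using r \<open>0 \<le> \<gamma>\<close> by (intro powr_mono2) (auto simp: power_le_one)
    then show ?thesis
      using \<open>0 < \<rho>\<close> by (simp add: powr_mult)
  qed
  ultimately have "(1 - r\<^sup>2) powr (\<gamma> + 1) * cmod (deriv h z)
                    \<le> 4 powr (\<gamma> + 1) * (\<rho> powr (\<gamma> + 1) * cmod (deriv h z))"
    unfolding mult.assoc[symmetric] by (intro mult_right_mono) auto
  also have "\<dots> \<le> 4 powr (\<gamma> + 1) * K"
    using \<open>\<rho> powr (\<gamma> + 1) * cmod (deriv h z) \<le> K\<close> by (intro mult_left_mono) auto
  finally show "(1 - (cmod z)\<^sup>2) powr (\<gamma> + 1) * cmod (deriv h z) \<le> 4 powr (\<gamma> + 1) * K"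
    by (simp add: r_def)
qed

lemma weighted_sup_le_funpow_intop:
  assumes "0 < \<gamma>"
  obtains C where "\<And>h K. h holomorphic_on ball 0 1 \<Longrightarrow> weighted_sup_le (\<gamma> + real m) h K \<Longrightarrow>
           weighted_sup_le \<gamma> ((intop ^^ m) h) (C * K)"
proof -
  have "\<exists>C. \<forall>h K. h holomorphic_on ball 0 1 \<longrightarrow> weighted_sup_le (\<gamma> + real m) h K \<longrightarrow>
           weighted_sup_le \<gamma> ((intop ^^ m) h) (C * K)"
    using assms
  proof (induction m arbitrary: \<gamma>)
    case 0
    show ?case
      by (intro exI[of _ 1]) simp
  next
    case (Suc m)
    obtain C where C: "\<And>h K. h holomorphic_on ball 0 1 \<Longrightarrow>
        weighted_sup_le (\<gamma> + 1 + real m) h K \<Longrightarrow> weighted_sup_le (\<gamma> + 1) ((intop ^^ m) h) (C * K)"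
      using Suc.IH[of "\<gamma> + 1"] Suc.prems by auto
    have "weighted_sup_le \<gamma> ((intop ^^ Suc m) h) (2 powr \<gamma> / \<gamma> * C * K)"
      if h: "h holomorphic_on ball 0 1" and K: "weighted_sup_le (\<gamma> + real (Suc m)) h K" for h K
    proof -
      have "weighted_sup_le (\<gamma> + 1) ((intop ^^ m) h) (C * K)"
        using C[OF h] K by (simp add: add_ac)
      from weighted_sup_le_intop[OF holomorphic_on_funpow_intop[OF unit_ball_intop_domain h] _ this]
      show ?thesis
        using Suc.prems by (simp add: mult.assoc)
    qed
    then show ?case
      by (intro exI[of _ "2 powr \<gamma> / \<gamma> * C"]) auto
  qed
  then show ?thesis
    using that by blast
qed

lemma weighted_sup_le_of_funpow_intop:
  assumes g: "g holomorphic_on ball 0 1" and "0 \<le> \<gamma>"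
    and "weighted_sup_le \<gamma> ((intop ^^ m) g) K"
  shows "\<exists>K'. weighted_sup_le (\<gamma> + real m) g K'"
  using assms(2,3)
proof (induction m arbitrary: \<gamma> K)
  case (Suc m)
  have hol: "(intop ^^ m) g holomorphic_on ball 0 1"
    using holomorphic_on_funpow_intop[OF unit_ball_intop_domain g] .
  have "weighted_sup_le (\<gamma> + 1) (deriv (intop ((intop ^^ m) g))) (4 powr (\<gamma> + 1) * K)"
    using Suc.prems
    by (intro weighted_sup_le_deriv holomorphic_on_intop[OF unit_ball_intop_domain hol]) auto
  then have "weighted_sup_le (\<gamma> + 1) ((intop ^^ m) g) (4 powr (\<gamma> + 1) * K)"
    by (subst (asm) weighted_sup_le_cong[OF deriv_intop[OF unit_ball_intop_domain hol]])
  then show ?case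
    using Suc.IH[of "\<gamma> + 1"] Suc.prems by (simp add: add_ac)
qed auto

lemma powr_add_le_add_powr:
  fixes x y p :: real
  assumes "0 \<le> x" "0 \<le> y" "0 < p" "p \<le> 1"
  shows "(x + y) powr p \<le> x powr p + y powr p"
proof (cases "x + y = 0")
  case False
  define s where "s = x + y"
  have "0 < s"
    using False assms by (simp add: s_def)
  have le_powr: "t \<le> t powr p" if "0 \<le> t" "t \<le> 1" for t
    using powr_mono'[OF \<open>p \<le> 1\<close> that] that by simp
  have "1 = x / s + y / s"
    using \<open>0 < s\<close> by (simp add: s_def add_divide_distrib[symmetric])
  also have "\<dots> \<le> (x / s) powr p + (y / s) powr p"
    using assms \<open>0 < s\<close> by (intro add_mono le_powr) (auto simp: s_def field_simps)
  also have "\<dots> = (x powr p + y powr p) / s powr p"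
    using assms \<open>0 < s\<close> by (simp add: powr_divide add_divide_distrib)
  finally show ?thesis
    using \<open>0 < s\<close> by (simp add: s_def le_divide_eq)
qed simp

lemma bloch_space_radial_diff_le:
  assumes f: "f \<in> bloch_space \<alpha>" and \<alpha>: "0 < \<alpha>" "\<alpha> < 1"
    and z: "z \<in> ball 0 1" and a: "0 \<le> a" "a < 1"
  shows "cmod (f z - f (of_real a * z)) \<le> (bloch_norm \<alpha> f - cmod (f 0)) / (1 - \<alpha>) * (1 - a) powr (1 - \<alpha>)"
proof -
  define S where "S = bloch_norm \<alpha> f - cmod (f 0)"
  define r where "r = cmod z"
  have r: "0 \<le> r" "r < 1"
    using z by (auto simp: r_def)
  have S: "weighted_sup_le \<alpha> (deriv f) S"
    unfolding S_def using f by (rule weighted_sup_le_bloch_norm)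
  then have "0 \<le> S"
    by (rule weighted_sup_le_nonneg)
  have "(1 - a * r) powr (1 - \<alpha>) = ((1 - r) + r * (1 - a)) powr (1 - \<alpha>)"
    by (simp add: algebra_simps)
  also have "\<dots> \<le> (1 - r) powr (1 - \<alpha>) + (r * (1 - a)) powr (1 - \<alpha>)"
    using r a \<alpha> by (intro powr_add_le_add_powr) auto
  also have "(r * (1 - a)) powr (1 - \<alpha>) \<le> (1 - a) powr (1 - \<alpha>)"
    using r a \<alpha> by (intro powr_mono2) (auto simp: mult_left_le_one_le)
  finally have "(1 - a * r) powr (1 - \<alpha>) - (1 - r) powr (1 - \<alpha>) \<le> (1 - a) powr (1 - \<alpha>)"
    by linarith
  then have "S / (1 - \<alpha>) * ((1 - a * r) powr (1 - \<alpha>) - (1 - r) powr (1 - \<alpha>))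
               \<le> S / (1 - \<alpha>) * (1 - a) powr (1 - \<alpha>)"
    using \<alpha> \<open>0 \<le> S\<close> by (intro mult_left_mono) auto
  moreover have "cmod (f z - f (of_real a * z))
                   \<le> S / (1 - \<alpha>) * ((1 - a * r) powr (1 - \<alpha>) - (1 - r) powr (1 - \<alpha>))"
    unfolding r_def using f \<alpha> z a S by (intro norm_diff_radial_le) (auto simp: bloch_space_iff)
  ultimately show ?thesis
    by (simp add: S_def)
qed

lemma bloch_space_norm_le:
  assumes f: "f \<in> bloch_space \<alpha>" and \<alpha>: "0 < \<alpha>" "\<alpha> < 1" and z: "z \<in> ball 0 1"
  shows "cmod (f z) \<le> bloch_norm \<alpha> f / (1 - \<alpha>)"
proof -
  have "cmod (f z - f 0) \<le> (bloch_norm \<alpha> f - cmod (f 0)) / (1 - \<alpha>)"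
    using bloch_space_radial_diff_le[OF f \<alpha> z, of 0] by simp
  moreover have "cmod (f 0) \<le> cmod (f 0) / (1 - \<alpha>)"
    using \<alpha> by (simp add: le_divide_eq mult_left_le)
  ultimately show ?thesis
    using norm_triangle_ineq2[of "f z" "f 0"] by (simp add: diff_divide_distrib)
qed

lemma exists_radius_powr_less:
  fixes B p e :: real
  assumes "0 < p" and "0 < e"
  shows "\<exists>a. 0 \<le> a \<and> a < 1 \<and> B * (1 - a) powr p < e"
proof -
  have in_01: "\<forall>\<^sub>F a in at_left 1. a \<in> {0<..<1::real}"
    by (rule eventually_at_left_real) simp
  have "((\<lambda>a::real. 1 - a) \<longlongrightarrow> 0) (at_left 1)"
    using tendsto_diff[OF tendsto_const[of 1] tendsto_ident_at[of 1 "{..<1}"]] by simp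
  then have "((\<lambda>a. B * (1 - a) powr p) \<longlongrightarrow> B * 0) (at_left 1)"
    using in_01 \<open>0 < p\<close>
    by (intro tendsto_mult tendsto_const tendsto_zero_powrI) (auto elim!: eventually_mono)
  then have "\<forall>\<^sub>F a in at_left 1. B * (1 - a) powr p < e"
    using order_tendstoD(2)[of _ "B * 0" _ e] \<open>0 < e\<close> by simp
  then have "\<exists>a. B * (1 - a) powr p < e \<and> a \<in> {0<..<1}"
    using eventually_happens'[OF trivial_limit_at_left_real eventually_conj[OF _ in_01]] by blast
  then show ?thesis
    by (auto simp: less_eq_real_def)
qed

lemma uniform_limit_on_unit_ball:
  fixes F :: "nat \<Rightarrow> complex \<Rightarrow> complex"
  assumes lim: "\<And>K. compact K \<Longrightarrow> K \<subseteq> ball 0 1 \<Longrightarrow> uniform_limit K F \<phi> sequentially"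
    and radial: "\<And>k z a. z \<in> ball 0 1 \<Longrightarrow> 0 \<le> a \<Longrightarrow> a < 1 \<Longrightarrow>
                   cmod (F k z - F k (of_real a * z)) \<le> B * (1 - a) powr p"
    and "0 < p"
  shows "uniform_limit (ball 0 1) F \<phi> sequentially"
proof (rule uniform_limitI)
  fix e :: real assume "0 < e"
  have scaled: "of_real a * z \<in> cball 0 a" if "z \<in> ball 0 1" "0 \<le> a" for z :: complex and a :: real
    using that mult_left_le[of "cmod z" a] by (simp add: norm_mult)
  obtain a where a: "0 \<le> a" "a < 1" and small: "B * (1 - a) powr p < e / 3"
    using exists_radius_powr_less[OF \<open>0 < p\<close>, of "e / 3" B] \<open>0 < e\<close> by auto
  have pointwise: "((\<lambda>k. F k w) \<longlongrightarrow> \<phi> w) sequentially" if "w \<in> ball 0 1" for w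
    using that by (intro tendsto_uniform_limitI[OF lim[of "{w}"]]) auto
  have \<phi>_radial: "cmod (\<phi> z - \<phi> (of_real a * z)) \<le> B * (1 - a) powr p" if z: "z \<in> ball 0 1" for z
  proof (rule Lim_norm_ubound[OF trivial_limit_sequentially tendsto_diff])
    have "of_real a * z \<in> ball 0 1"
      using scaled[OF z a(1)] a(2) by simp
    then show "((\<lambda>k. F k z) \<longlongrightarrow> \<phi> z) sequentially"
      "((\<lambda>k. F k (of_real a * z)) \<longlongrightarrow> \<phi> (of_real a * z)) sequentially"
      using pointwise z by blast+
    show "\<forall>\<^sub>F k in sequentially. cmod (F k z - F k (of_real a * z)) \<le> B * (1 - a) powr p"
      using radial[OF z a] by simp
  qed
  have "\<forall>\<^sub>F k in sequentially. \<forall>x\<in>cball 0 a. dist (F k x) (\<phi> x) < e / 3"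
    using \<open>0 < e\<close> a by (intro uniform_limitD[OF lim]) auto
  then show "\<forall>\<^sub>F k in sequentially. \<forall>z\<in>ball 0 1. dist (F k z) (\<phi> z) < e"
  proof (rule eventually_mono, intro ballI)
    fix k and z :: complex assume near: "\<forall>x\<in>cball 0 a. dist (F k x) (\<phi> x) < e / 3" and z: "z \<in> ball 0 1"
    define w where "w = of_real a * z"
    have "dist (F k z) (\<phi> z) = cmod ((F k z - F k w) + (F k w - \<phi> w) + (\<phi> w - \<phi> z))"
      by (simp add: dist_norm)
    also have "\<dots> \<le> cmod (F k z - F k w) + cmod (F k w - \<phi> w) + cmod (\<phi> z - \<phi> w)"
      using norm_triangle_ineq[of "F k z - F k w + (F k w - \<phi> w)" "\<phi> w - \<phi> z"]
        norm_triangle_ineq[of "F k z - F k w" "F k w - \<phi> w"] norm_minus_commute[of "\<phi> w" "\<phi> z"]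
      by linarith
    also have "\<dots> < e"
      using radial[OF z a, of k] near[rule_format, OF scaled[OF z a(1)]] \<phi>_radial[OF z] small
      unfolding w_def dist_norm by linarith
    finally show "dist (F k z) (\<phi> z) < e" .
  qed
qed

lemma bloch_space_bounded_seq_uniform_subseq:
  fixes F :: "nat \<Rightarrow> complex \<Rightarrow> complex"
  assumes \<alpha>: "0 < \<alpha>" "\<alpha> < 1"
    and F: "\<And>k. F k \<in> bloch_space \<alpha>" and M: "\<And>k. bloch_norm \<alpha> (F k) \<le> M"
  obtains r \<phi> where "strict_mono r" "\<phi> holomorphic_on ball 0 1"
    "\<And>z. z \<in> ball 0 1 \<Longrightarrow> cmod (\<phi> z) \<le> M / (1 - \<alpha>)"
    "uniform_limit (ball 0 1) (F \<circ> r) \<phi> sequentially"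
proof -
  have bound: "cmod (F k z) \<le> M / (1 - \<alpha>)" if "z \<in> ball 0 1" for k z
    using bloch_space_norm_le[OF F[of k] \<alpha> that] divide_right_mono[OF M[of k], of "1 - \<alpha>"] \<alpha> by simp
  have radial: "cmod (F k z - F k (of_real a * z)) \<le> M / (1 - \<alpha>) * (1 - a) powr (1 - \<alpha>)"
    if "z \<in> ball 0 1" "0 \<le> a" "a < 1" for k z a
  proof -
    have "(bloch_norm \<alpha> (F k) - cmod (F k 0)) / (1 - \<alpha>) \<le> M / (1 - \<alpha>)"
      using M[of k] \<alpha> norm_ge_zero[of "F k 0"] by (intro divide_right_mono) linarith+
    then show ?thesis
      using bloch_space_radial_diff_le[OF F[of k] \<alpha> that]
      by (meson mult_right_mono order_trans powr_ge_zero)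
  qed
  define \<H> where "\<H> = {h. h holomorphic_on ball 0 1 \<and> (\<forall>z\<in>ball 0 1. cmod (h z) \<le> M / (1 - \<alpha>))}"
  obtain \<phi> r where \<phi>: "\<phi> holomorphic_on ball 0 1" and r: "strict_mono r"
    and lim: "\<And>K. compact K \<Longrightarrow> K \<subseteq> ball 0 1 \<Longrightarrow> uniform_limit K (F \<circ> r) \<phi> sequentially"
  proof (rule Montel[of "ball 0 1" \<H> F])
    show "range F \<subseteq> \<H>"
      using F bound by (auto simp: \<H>_def bloch_space_iff)
  qed (auto simp: \<H>_def intro!: exI[of _ "M / (1 - \<alpha>)"])
  have unif: "uniform_limit (ball 0 1) (F \<circ> r) \<phi> sequentially"
    using lim radial \<alpha>
    by (intro uniform_limit_on_unit_ball[where B = "M / (1 - \<alpha>)" and p = "1 - \<alpha>"]) auto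
  have "cmod (\<phi> z) \<le> M / (1 - \<alpha>)" if "z \<in> ball 0 1" for z
    using tendsto_uniform_limitI[OF unif that] bound that
    by (intro Lim_norm_ubound[OF trivial_limit_sequentially]) auto
  with that r \<phi> unif show ?thesis
    by blast
qed

lemma funpow_intop_mult_bloch_bound:
  assumes g: "g holomorphic_on ball 0 1" and "0 < \<beta>" and Mg: "weighted_sup_le (\<beta> + real m) g Mg"
  obtains C where "\<And>u B. u holomorphic_on ball 0 1 \<Longrightarrow> (\<And>z. z \<in> ball 0 1 \<Longrightarrow> cmod (u z) \<le> B) \<Longrightarrow>
           (intop ^^ Suc m) (\<lambda>z. u z * g z) \<in> bloch_space \<beta> \<and>
           bloch_norm \<beta> ((intop ^^ Suc m) (\<lambda>z. u z * g z)) \<le> C * B"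
proof -
  obtain C where C: "\<And>h K. h holomorphic_on ball 0 1 \<Longrightarrow> weighted_sup_le (\<beta> + real m) h K \<Longrightarrow>
      weighted_sup_le \<beta> ((intop ^^ m) h) (C * K)"
    using weighted_sup_le_funpow_intop[OF \<open>0 < \<beta>\<close>] by blast
  have main: "(intop ^^ Suc m) (\<lambda>z. u z * g z) \<in> bloch_space \<beta> \<and>
        bloch_norm \<beta> ((intop ^^ Suc m) (\<lambda>z. u z * g z)) \<le> C * Mg * B"
    if u: "u holomorphic_on ball 0 1" and B: "\<And>z. z \<in> ball 0 1 \<Longrightarrow> cmod (u z) \<le> B" for u B
  proof -
    let ?h = "\<lambda>z. u z * g z"
    have h: "?h holomorphic_on ball 0 1"
      using u g by (rule holomorphic_on_mult)
    have "weighted_sup_le (\<beta> + real m) ?h (B * Mg)"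
      using Mg B by (rule weighted_sup_le_mult_bounded)
    then have "weighted_sup_le \<beta> ((intop ^^ m) ?h) (C * (B * Mg))"
      by (rule C[OF h])
    then have "weighted_sup_le \<beta> (deriv ((intop ^^ Suc m) ?h)) (C * Mg * B)"
      by (subst weighted_sup_le_cong[OF deriv_funpow_intop_Suc[OF unit_ball_intop_domain h]])
         (simp_all add: mult_ac)
    moreover have "(intop ^^ Suc m) ?h holomorphic_on ball 0 1"
      using holomorphic_on_funpow_intop[OF unit_ball_intop_domain h] .
    ultimately show ?thesis
      using bloch_norm_le[of \<beta> "(intop ^^ Suc m) ?h"] by (auto simp: bloch_space_iff)
  qed
  show ?thesis
    using that[of "C * Mg"] main by blast
qed

lemma bounded_op_bloch_funpow_intop_mult:
  assumes g: "g holomorphic_on ball 0 1" and "0 < \<beta>" and \<alpha>: "0 < \<alpha>" "\<alpha> < 1"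
    and Mg: "weighted_sup_le (\<beta> + real m) g Mg"
  shows "bounded_op_bloch (\<lambda>f. (intop ^^ Suc m) (\<lambda>z. f z * g z)) \<alpha> \<beta>"
proof -
  obtain C where C: "\<And>u B. u holomorphic_on ball 0 1 \<Longrightarrow> (\<And>z. z \<in> ball 0 1 \<Longrightarrow> cmod (u z) \<le> B) \<Longrightarrow>
      (intop ^^ Suc m) (\<lambda>z. u z * g z) \<in> bloch_space \<beta> \<and>
      bloch_norm \<beta> ((intop ^^ Suc m) (\<lambda>z. u z * g z)) \<le> C * B"
    using funpow_intop_mult_bloch_bound[OF g \<open>0 < \<beta>\<close> Mg] by blast
  have "(intop ^^ Suc m) (\<lambda>z. f z * g z) \<in> bloch_space \<beta> \<and>
        bloch_norm \<beta> ((intop ^^ Suc m) (\<lambda>z. f z * g z)) \<le> C / (1 - \<alpha>) * bloch_norm \<alpha> f"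
    if f: "f \<in> bloch_space \<alpha>" for f
    using C[of f "bloch_norm \<alpha> f / (1 - \<alpha>)"] bloch_space_norm_le[OF f \<alpha>] f
    by (simp add: bloch_space_iff)
  then show ?thesis
    unfolding bounded_op_bloch_def by blast
qed

lemma bloch_norm_tendsto_zero_if_uniform_limit:
  fixes T :: "(complex \<Rightarrow> complex) \<Rightarrow> complex \<Rightarrow> complex" and F :: "nat \<Rightarrow> complex \<Rightarrow> complex"
  assumes bound: "\<And>u B. u holomorphic_on ball 0 1 \<Longrightarrow> (\<And>z. z \<in> ball 0 1 \<Longrightarrow> cmod (u z) \<le> B) \<Longrightarrow>
                    T u \<in> bloch_space \<beta> \<and> bloch_norm \<beta> (T u) \<le> C * B"
    and diff: "\<And>u v z. u holomorphic_on ball 0 1 \<Longrightarrow> v holomorphic_on ball 0 1 \<Longrightarrow> z \<in> ball 0 1 \<Longrightarrow>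
                 T u z - T v z = T (\<lambda>w. u w - v w) z"
    and F: "\<And>k. F k holomorphic_on ball 0 1" and \<phi>: "\<phi> holomorphic_on ball 0 1"
    and unif: "uniform_limit (ball 0 1) F \<phi> sequentially"
  shows "(\<lambda>k. bloch_norm \<beta> (\<lambda>z. T (F k) z - T \<phi> z)) \<longlonglongrightarrow> 0"
  unfolding tendsto_iff
proof (intro allI impI)
  fix e :: real assume "0 < e"
  have "0 \<le> C"
    using bound[of "\<lambda>_. 0" 1] bloch_norm_nonneg[of "T (\<lambda>_. 0)" \<beta>] by auto
  have "\<forall>\<^sub>F k in sequentially. \<forall>z\<in>ball 0 1. dist (F k z) (\<phi> z) < e / (C + 1)"
    using uniform_limitD[OF unif, of "e / (C + 1)"] \<open>0 < e\<close> \<open>0 \<le> C\<close> by simp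
  then show "\<forall>\<^sub>F k in sequentially. dist (bloch_norm \<beta> (\<lambda>z. T (F k) z - T \<phi> z)) 0 < e"
  proof (rule eventually_mono)
    fix k assume close: "\<forall>z\<in>ball 0 1. dist (F k z) (\<phi> z) < e / (C + 1)"
    have "bloch_norm \<beta> (\<lambda>z. T (F k) z - T \<phi> z) = bloch_norm \<beta> (T (\<lambda>w. F k w - \<phi> w))"
      using diff[OF F \<phi>] by (rule bloch_norm_cong)
    moreover have "T (\<lambda>w. F k w - \<phi> w) \<in> bloch_space \<beta> \<and>
                   bloch_norm \<beta> (T (\<lambda>w. F k w - \<phi> w)) \<le> C * (e / (C + 1))"
      using close F \<phi> by (intro bound holomorphic_on_diff) (auto simp: dist_norm less_imp_le)
    moreover have "C * (e / (C + 1)) < e"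
      using \<open>0 \<le> C\<close> \<open>0 < e\<close> by (simp add: field_simps)
    ultimately show "dist (bloch_norm \<beta> (\<lambda>z. T (F k) z - T \<phi> z)) 0 < e"
      using bloch_norm_nonneg by auto
  qed
qed

lemma compact_op_bloch_funpow_intop_mult:
  assumes g: "g holomorphic_on ball 0 1" and "0 < \<beta>" and \<alpha>: "0 < \<alpha>" "\<alpha> < 1"
    and Mg: "weighted_sup_le (\<beta> + real m) g Mg"
  shows "compact_op_bloch (\<lambda>f. (intop ^^ Suc m) (\<lambda>z. f z * g z)) \<alpha> \<beta>"
proof -
  define T where "T f = (intop ^^ Suc m) (\<lambda>z. f z * g z)" for f :: "complex \<Rightarrow> complex"
  obtain C where C: "\<And>u B. u holomorphic_on ball 0 1 \<Longrightarrow> (\<And>z. z \<in> ball 0 1 \<Longrightarrow> cmod (u z) \<le> B) \<Longrightarrow>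
      T u \<in> bloch_space \<beta> \<and> bloch_norm \<beta> (T u) \<le> C * B"
    using funpow_intop_mult_bloch_bound[OF g \<open>0 < \<beta>\<close> Mg] unfolding T_def by blast
  have T_diff: "T u z - T v z = T (\<lambda>w. u w - v w) z"
    if "u holomorphic_on ball 0 1" "v holomorphic_on ball 0 1" "z \<in> ball 0 1" for u v z
    unfolding T_def using that(1,2) g that(3) by (rule funpow_intop_mult_diff[OF unit_ball_intop_domain])
  have "\<exists>r h. strict_mono r \<and> h \<in> bloch_space \<beta> \<and> (\<lambda>k. bloch_norm \<beta> (\<lambda>z. T (F (r k)) z - h z)) \<longlonglongrightarrow> 0"
    if F_bloch: "\<And>k. F k \<in> bloch_space \<alpha>" and F_bounded: "\<And>k. bloch_norm \<alpha> (F k) \<le> M"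
    for F :: "nat \<Rightarrow> complex \<Rightarrow> complex" and M :: real
  proof -
    obtain r \<phi> where r: "strict_mono r" and \<phi>: "\<phi> holomorphic_on ball 0 1"
      and \<phi>_bound: "\<And>z. z \<in> ball 0 1 \<Longrightarrow> cmod (\<phi> z) \<le> M / (1 - \<alpha>)"
      and unif: "uniform_limit (ball 0 1) (F \<circ> r) \<phi> sequentially"
      using bloch_space_bounded_seq_uniform_subseq[where F = F and M = M, OF \<alpha> F_bloch F_bounded]
      by blast
    have "(F \<circ> r) k holomorphic_on ball 0 1" for k
      using F_bloch by (simp add: bloch_space_iff)
    then have "(\<lambda>k. bloch_norm \<beta> (\<lambda>z. T ((F \<circ> r) k) z - T \<phi> z)) \<longlonglongrightarrow> 0"
      using C T_diff \<phi> unif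
      by (intro bloch_norm_tendsto_zero_if_uniform_limit[where T = T and C = C]) (auto simp: o_def)
    with r C[OF \<phi> \<phi>_bound] show ?thesis
      by (auto simp: o_def)
  qed
  moreover have "T f \<in> bloch_space \<beta>" if "f \<in> bloch_space \<alpha>" for f
    using bounded_op_bloch_funpow_intop_mult[OF assms] that by (simp add: bounded_op_bloch_def T_def)
  ultimately show ?thesis
    unfolding compact_op_bloch_def T_def[symmetric] by blast
qed

lemma weighted_sup_le_if_funpow_intop_in_bloch_space:
  assumes g: "g holomorphic_on ball 0 1" and "0 \<le> \<beta>"
    and "(intop ^^ Suc m) g \<in> bloch_space \<beta>"
  shows "\<exists>K. weighted_sup_le (\<beta> + real m) g K"
proof -
  obtain K where "weighted_sup_le \<beta> (deriv ((intop ^^ Suc m) g)) K"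
    using assms(3) by (auto simp: bloch_space_iff)
  then have "weighted_sup_le \<beta> ((intop ^^ m) g) K"
    by (subst (asm) weighted_sup_le_cong[OF deriv_funpow_intop_Suc[OF unit_ball_intop_domain g]])
  then show ?thesis
    using weighted_sup_le_of_funpow_intop[OF g \<open>0 \<le> \<beta>\<close>] by blast
qed

theorem proposition4p2:
  fixes \<alpha> \<beta> :: real and n :: nat and g :: "complex \<Rightarrow> complex"
  assumes "\<beta> > 0" and "0 < \<alpha>" and "\<alpha> < 1" and "n \<ge> 1"
    and "g holomorphic_on ball 0 1"
  defines "T \<equiv> (\<lambda>f. (intop ^^ n) (\<lambda>z. f z * g z))"
  shows "(bounded_op_bloch T \<alpha> \<beta> \<longleftrightarrow> compact_op_bloch T \<alpha> \<beta>) \<and>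
         (compact_op_bloch T \<alpha> \<beta> \<longleftrightarrow>
            bdd_above ((\<lambda>z. (1 - (cmod z)\<^sup>2) powr (real n + \<beta> - 1) * cmod (g z)) ` ball 0 1))"
proof -
  obtain m where n: "n = Suc m"
    using \<open>n \<ge> 1\<close> by (cases n) auto
  have growth_iff: "bdd_above ((\<lambda>z. (1 - (cmod z)\<^sup>2) powr (real n + \<beta> - 1) * cmod (g z)) ` ball 0 1)
                      \<longleftrightarrow> (\<exists>K. weighted_sup_le (\<beta> + real m) g K)"
    by (simp add: n bdd_above_weighted_iff add.commute)
  have "T (\<lambda>_. 1) \<in> bloch_space \<beta>" if "bounded_op_bloch T \<alpha> \<beta> \<or> compact_op_bloch T \<alpha> \<beta>"
    using that constant_in_bloch_space unfolding bounded_op_bloch_def compact_op_bloch_def by blast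
  then have "\<exists>K. weighted_sup_le (\<beta> + real m) g K"
    if "bounded_op_bloch T \<alpha> \<beta> \<or> compact_op_bloch T \<alpha> \<beta>"
    using that assms(1,5)
    by (intro weighted_sup_le_if_funpow_intop_in_bloch_space) (auto simp: T_def n)
  moreover have "bounded_op_bloch T \<alpha> \<beta> \<and> compact_op_bloch T \<alpha> \<beta>"
    if "weighted_sup_le (\<beta> + real m) g K" for K
    unfolding T_def n using that assms(1,2,3,5)
    by (blast intro: bounded_op_bloch_funpow_intop_mult compact_op_bloch_funpow_intop_mult)
  ultimately show ?thesis
    unfolding growth_iff by blast
qed

end
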